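(* Let $n\ge1$ and let $k_1\le k_2\le\cdots\le k_n$ be integers. Then $$\sum_{A} (-1)^{\#\{\text{special little triangles in }A\}}$$ over all arrowed Gelfand–Tsetlin patterns $A$ with bottom row $k_1,\ldots,k_n$ in which no entry is decorated with the double arrow $\nwarrow\nearrow$, equals the number of Gelfand–Tsetlin patterns with bottom row $k_1,\ldots,k_n$ in which every integer appears at most twice in each row, and whose entries each carry either no decoration or one decoration from $\{\nwarrow,\nearrow\}$, such that: (i) if an entry $a$ equals its $\nearrow$-neighbor then $a$ is not decorated with $\nearrow$, and if $a$ equals its $\nwarrow$-neighbor then $a$ is not decorated with $\nwarrow$; and (ii) whenever two entries in the same row are equal, at least one of them is decorated.
   Context: A Gelfand–Tsetlin pattern with $n$ rows is a triangular array of integers $(a_{i,j})_{1\le j\le i\le n}$, row $i$ being $a_{i,1},\ldots,a_{i,i}$, drawn so that $a_{i-1,j}$ sits between $a_{i,j}$ and $a_{i,j+1}$, satisfying $a_{i+1,j}\le a_{i,j}\le a_{i+1,j+1}$ for all $1\le j\le i<n$. Row $n$ is the bottom row. For an entry $a_{i,j}$: its $\nwarrow$-neighbor is $a_{i-1,j-1}$ and its $\nearrow$-neighbor is $a_{i-1,j}$ (when they exist), its $\swarrow$-neighbor is $a_{i+1,j}$ and its $\searrow$-neighbor is $a_{i+1,j+1}$, and its left/right neighbors are $a_{i,j-1}$, $a_{i,j+1}$. An arrowed Gelfand–Tsetlin pattern is a Gelfand–Tsetlin pattern in which each entry either carries no decoration or carries exactly one decoration from $\{\nwarrow,\nearrow,\nwarrow\nearrow\}$,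 subject to: if an entry $a$ equals its $\nearrow$-neighbor and is decorated with $\nearrow$ or $\nwarrow\nearrow$, then the entry to the right of $a$ in the same row also equals $a$ and is decorated with $\nwarrow$ or $\nwarrow\nearrow$; and if $a$ equals its $\nwarrow$-neighbor and is decorated with $\nwarrow$ or $\nwarrow\nearrow$, then the entry to the left of $a$ in the same row also equals $a$ and is decorated with $\nearrow$ or $\nwarrow\nearrow$. A special little triangle is an entry $a$ that equals both its $\swarrow$-neighbor $b$ and its $\searrow$-neighbor $c$, where $b$ is decorated with $\nearrow$ or $\nwarrow\nearrow$ and $c$ is decorated with $\nwarrow$ or $\nwarrow\nearrow$. *)

theory Defs
  imports Main
begin

datatype dec = NoDec | NW | NE | Both

(* A pattern with n rows is a function a :: nat => nat => int; entry a i j is meaningful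
   for 1 <= j <= i <= n (row i, position j); outside this range we normalize a i j = 0
   (and decorations to NoDec) so that patterns are unique representatives. *)
definition in_tri :: "nat \<Rightarrow> nat \<Rightarrow> nat \<Rightarrow> bool" where
  "in_tri n i j \<longleftrightarrow> 1 \<le> j \<and> j \<le> i \<and> i \<le> n"

definition gt_pattern :: "nat \<Rightarrow> (nat \<Rightarrow> int) \<Rightarrow> (nat \<Rightarrow> nat \<Rightarrow> int) \<Rightarrow> bool" where
  "gt_pattern n k a \<longleftrightarrow>
     (\<forall>i j. \<not> in_tri n i j \<longrightarrow> a i j = 0) \<and>
     (\<forall>j. 1 \<le> j \<and> j \<le> n \<longrightarrow> a n j = k j) \<and>
     (\<forall>i j. 1 \<le> j \<and> j \<le> i \<and> i < n \<longrightarrow> a (Suc i) j \<le> a i j \<and> a i j \<le> a (Suc i) (Suc j))"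

definition dec_normal :: "nat \<Rightarrow> (nat \<Rightarrow> nat \<Rightarrow> dec) \<Rightarrow> bool" where
  "dec_normal n d \<longleftrightarrow> (\<forall>i j. \<not> in_tri n i j \<longrightarrow> d i j = NoDec)"

definition has_ne :: "dec \<Rightarrow> bool" where
  "has_ne x \<longleftrightarrow> x = NE \<or> x = Both"

definition has_nw :: "dec \<Rightarrow> bool" where
  "has_nw x \<longleftrightarrow> x = NW \<or> x = Both"

(* The nearrow-neighbour of a_{i,j} is a_{i-1,j} (exists iff i >= 2 and j <= i-1);
   the nwarrow-neighbour is a_{i-1,j-1} (exists iff i >= 2 and j >= 2). *)
definition arrowed_cond :: "nat \<Rightarrow> (nat \<Rightarrow> nat \<Rightarrow> int) \<Rightarrow> (nat \<Rightarrow> nat \<Rightarrow> dec) \<Rightarrow> bool" where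
  "arrowed_cond n a d \<longleftrightarrow>
     (\<forall>i j. in_tri n i j \<and> 2 \<le> i \<and> j < i \<and> a i j = a (i - 1) j \<and> has_ne (d i j)
        \<longrightarrow> j + 1 \<le> i \<and> a i (j + 1) = a i j \<and> has_nw (d i (j + 1))) \<and>
     (\<forall>i j. in_tri n i j \<and> 2 \<le> i \<and> 2 \<le> j \<and> a i j = a (i - 1) (j - 1) \<and> has_nw (d i j)
        \<longrightarrow> 1 \<le> j - 1 \<and> a i (j - 1) = a i j \<and> has_ne (d i (j - 1)))"

definition arrowed_GT :: "nat \<Rightarrow> (nat \<Rightarrow> int) \<Rightarrow> ((nat \<Rightarrow> nat \<Rightarrow> int) \<times> (nat \<Rightarrow> nat \<Rightarrow> dec)) set" where
  "arrowed_GT n k = {(a, d). gt_pattern n k a \<and> dec_normal n d \<and> arrowed_cond n a d}"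

definition special_triangles :: "nat \<Rightarrow> (nat \<Rightarrow> nat \<Rightarrow> int) \<Rightarrow> (nat \<Rightarrow> nat \<Rightarrow> dec) \<Rightarrow> (nat \<times> nat) set" where
  "special_triangles n a d = {(i, j). in_tri n i j \<and> i < n \<and>
      a i j = a (Suc i) j \<and> a i j = a (Suc i) (Suc j) \<and>
      has_ne (d (Suc i) j) \<and> has_nw (d (Suc i) (Suc j))}"

definition no_double :: "nat \<Rightarrow> (nat \<Rightarrow> nat \<Rightarrow> dec) \<Rightarrow> bool" where
  "no_double n d \<longleftrightarrow> (\<forall>i j. in_tri n i j \<longrightarrow> d i j \<noteq> Both)"

definition rhs_patterns :: "nat \<Rightarrow> (nat \<Rightarrow> int) \<Rightarrow> ((nat \<Rightarrow> nat \<Rightarrow> int) \<times> (nat \<Rightarrow> nat \<Rightarrow> dec)) set" where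
  "rhs_patterns n k = {(a, d). gt_pattern n k a \<and> dec_normal n d \<and> no_double n d \<and>
     (\<forall>i x. 1 \<le> i \<and> i \<le> n \<longrightarrow> card {j. 1 \<le> j \<and> j \<le> i \<and> a i j = x} \<le> 2) \<and>
     (\<forall>i j. in_tri n i j \<and> 2 \<le> i \<and> j < i \<and> a i j = a (i - 1) j \<longrightarrow> d i j \<noteq> NE) \<and>
     (\<forall>i j. in_tri n i j \<and> 2 \<le> i \<and> 2 \<le> j \<and> a i j = a (i - 1) (j - 1) \<longrightarrow> d i j \<noteq> NW) \<and>
     (\<forall>i j j'. in_tri n i j \<and> in_tri n i j' \<and> j < j' \<and> a i j = a i j'
        \<longrightarrow> d i j \<noteq> NoDec \<or> d i j' \<noteq> NoDec)}"

end

theory Submission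
  imports Defs "HOL-Library.Disjoint_Sets"
begin

(* Proof by a sign-reversing involution.  A pair block is a maximal run of two equal entries
   in a row; a triple block is a maximal run of three equal entries of row i lying under a
   maximal run of two equal entries of row i - 1.  A site is a triple block, or a pair block
   whose two decorations are (none, none) or (NE, NW).  The arrowed conditions confine the
   decorations of a site to a few admissible words; toggling them (none none <-> NE NW on a
   pair, a fixed pairing of the eight admissible words on a triple) keeps the pattern arrowed
   and free of double arrows, does not change the set of sites, and changes the number of
   special little triangles by one, since those sitting on the site are counted by whether
   its second entry is decorated.  Toggling at a site chosen from the set of sites is
   therefore a sign-reversing involution on the patterns having a site.  In a pattern without
   sites no row has three equal entries (they would force a triple block, found by moving up
   the rows), so equal entries of a row form pair blocks decorated neither (none, none) nor
   (NE, NW): these are exactly the patterns counted on the right, and they have no special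
   little triangles. *)

type_synonym entries = "nat \<Rightarrow> nat \<Rightarrow> int"

type_synonym decorations = "nat \<Rightarrow> nat \<Rightarrow> dec"

lemma finite_supported_matrices:
  assumes "finite I" "finite J" "finite B"
  shows "finite {f. \<forall>i j. (i \<in> I \<and> j \<in> J \<longrightarrow> f i j \<in> B) \<and> (\<not> (i \<in> I \<and> j \<in> J) \<longrightarrow> f i j = c)}"
proof -
  define R where "R = {r. \<forall>j. (j \<in> J \<longrightarrow> r j \<in> B) \<and> (j \<notin> J \<longrightarrow> r j = c)}"
  have "finite R"
    unfolding R_def using assms(2,3) by (rule finite_set_of_finite_funs)
  then have "finite {f. \<forall>i. (i \<in> I \<longrightarrow> f i \<in> R) \<and> (i \<notin> I \<longrightarrow> f i = (\<lambda>_. c))}"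
    using assms(1) by (intro finite_set_of_finite_funs)
  then show ?thesis
    by (rule finite_subset[rotated]) (auto simp: R_def)
qed

lemma minus_one_power_card_odd_change:
  assumes "finite A" "finite B" "A - Q = B - Q" "odd (card (A \<inter> Q) + card (B \<inter> Q))"
  shows "(-1::int) ^ card A = - ((-1) ^ card B)"
proof -
  have "card A = card (A - Q) + card (A \<inter> Q)" "card B = card (B - Q) + card (B \<inter> Q)"
    using card_Int_Diff[OF assms(1), of Q] card_Int_Diff[OF assms(2), of Q] by simp_all
  then show ?thesis
    using assms(3,4) by (auto simp: power_add minus_one_power_iff)
qed

section \<open>Gelfand-Tsetlin patterns\<close>

lemma gt_pattern_interlacing:
  assumes "gt_pattern n k a" "2 \<le> i" "i \<le> n" "1 \<le> j" "j < i"
  shows "a i j \<le> a (i - 1) j" "a (i - 1) j \<le> a i (Suc j)"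
proof -
  have "1 \<le> j \<and> j \<le> i - 1 \<and> i - 1 < n" using assms(2-5) by auto
  then have "a (Suc (i - 1)) j \<le> a (i - 1) j \<and> a (i - 1) j \<le> a (Suc (i - 1)) (Suc j)"
    using assms(1) unfolding gt_pattern_def by blast
  then show "a i j \<le> a (i - 1) j" "a (i - 1) j \<le> a i (Suc j)"
    using assms(2) by simp_all
qed

lemma gt_pattern_row_mono:
  assumes "gt_pattern n k a" "1 \<le> p" "p \<le> q" "q \<le> i" "i \<le> n"
  shows "a i p \<le> a i q"
  using assms(3,4)
proof (induction q rule: dec_induct)
  case (step q)
  then show ?case
    using gt_pattern_interlacing[OF assms(1), of i q] assms(2,5) by linarith
qed simp

lemma gt_pattern_row_const:
  assumes "gt_pattern n k a" "1 \<le> p" "p \<le> r" "r \<le> q" "q \<le> i" "i \<le> n" "a i q = a i p"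
  shows "a i r = a i p"
  using gt_pattern_row_mono[OF assms(1), of p r i] gt_pattern_row_mono[OF assms(1), of r q i] assms
  by simp

lemma gt_pattern_three_equal_above:
  assumes "gt_pattern n k a" "1 \<le> j" "Suc (Suc j) \<le> i" "i \<le> n"
    and "a i (Suc j) = a i j" "a i (Suc (Suc j)) = a i j"
  shows "a (i - 1) j = a i j" "a (i - 1) (Suc j) = a i j"
proof -
  have "2 \<le> i"
    using assms(2,3) by simp
  note interlacing = gt_pattern_interlacing[OF assms(1) this assms(4)]
  have "a i j \<le> a (i - 1) j" "a (i - 1) j \<le> a i (Suc j)"
    "a i (Suc j) \<le> a (i - 1) (Suc j)" "a (i - 1) (Suc j) \<le> a i (Suc (Suc j))"
    using interlacing[of j] interlacing[of "Suc j"] assms(2,3) by simp_all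
  then show "a (i - 1) j = a i j" "a (i - 1) (Suc j) = a i j"
    using assms(5,6) by linarith+
qed

lemma gt_pattern_entry_bounds:
  assumes "gt_pattern n k a" "in_tri n i j"
  shows "a i j \<in> {Min (k ` {1..n}) .. Max (k ` {1..n})}"
  using assms(2)
proof (induction "n - i" arbitrary: i j)
  case 0
  then have "a i j = k j" "j \<in> {1..n}"
    using assms(1) unfolding gt_pattern_def in_tri_def by auto
  then show ?case by simp
next
  case (Suc m)
  then have "in_tri n (Suc i) j" "in_tri n (Suc i) (Suc j)" "m = n - Suc i"
    unfolding in_tri_def by auto
  moreover have "a (Suc i) j \<le> a i j" "a i j \<le> a (Suc i) (Suc j)"
    using Suc assms(1) unfolding gt_pattern_def in_tri_def by auto
  ultimately show ?case
    using Suc.hyps(1)[of "Suc i"] by fastforce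
qed

lemma UNIV_dec: "(UNIV :: dec set) = {NoDec, NW, NE, Both}"
  using dec.exhaust by auto

lemma finite_decorated_gt_patterns:
  "finite {(a, d). gt_pattern n k a \<and> dec_normal n d}"
proof -
  define V where "V = insert 0 {Min (k ` {1..n}) .. Max (k ` {1..n})}"
  have "a i j \<in> V" if "gt_pattern n k a" for a i j
    using gt_pattern_entry_bounds[OF that, of i j] that unfolding V_def gt_pattern_def by auto
  moreover have "a i j = 0" if "gt_pattern n k a" "\<not> (i \<in> {1..n} \<and> j \<in> {1..n})" for a i j
    using that unfolding gt_pattern_def in_tri_def by auto
  ultimately have "{a. gt_pattern n k a} \<subseteq>
      {a. \<forall>i j. (i \<in> {1..n} \<and> j \<in> {1..n} \<longrightarrow> a i j \<in> V) \<and>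
        (\<not> (i \<in> {1..n} \<and> j \<in> {1..n}) \<longrightarrow> a i j = 0)}"
    by blast
  then have "finite {a. gt_pattern n k a}"
    by (rule finite_subset) (intro finite_supported_matrices, auto simp: V_def)
  moreover have "{d. dec_normal n d} \<subseteq>
      {d. \<forall>i j. (i \<in> {1..n} \<and> j \<in> {1..n} \<longrightarrow> d i j \<in> UNIV) \<and>
        (\<not> (i \<in> {1..n} \<and> j \<in> {1..n}) \<longrightarrow> d i j = NoDec)}"
    unfolding dec_normal_def in_tri_def by auto
  then have "finite {d. dec_normal n d}"
    by (rule finite_subset) (intro finite_supported_matrices, auto simp: UNIV_dec)
  ultimately have "finite ({a. gt_pattern n k a} \<times> {d. dec_normal n d})"
    by blast
  then show ?thesis
    by (rule finite_subset[rotated]) auto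
qed

lemma finite_special_triangles: "finite (special_triangles n a d)"
  by (rule finite_subset[of _ "{..n} \<times> {..n}"]) (auto simp: special_triangles_def in_tri_def)

section \<open>Maximal runs of equal entries\<close>

definition arrowed_at :: "nat \<Rightarrow> entries \<Rightarrow> decorations \<Rightarrow> nat \<Rightarrow> nat \<Rightarrow> bool" where
  "arrowed_at n a d i j \<longleftrightarrow>
     (in_tri n i j \<and> 2 \<le> i \<and> j < i \<and> a i j = a (i - 1) j \<and> has_ne (d i j)
        \<longrightarrow> a i (Suc j) = a i j \<and> has_nw (d i (Suc j))) \<and>
     (in_tri n i j \<and> 2 \<le> i \<and> 2 \<le> j \<and> a i j = a (i - 1) (j - 1) \<and> has_nw (d i j)
        \<longrightarrow> a i (j - 1) = a i j \<and> has_ne (d i (j - 1)))"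

lemma arrowed_cond_iff_arrowed_at: "arrowed_cond n a d \<longleftrightarrow> (\<forall>i j. arrowed_at n a d i j)"
  unfolding arrowed_cond_def arrowed_at_def by auto

definition maximal_run :: "entries \<Rightarrow> nat \<Rightarrow> nat \<Rightarrow> nat \<Rightarrow> bool" where
  "maximal_run a i j m \<longleftrightarrow> 1 \<le> j \<and> j + m \<le> Suc i \<and> (\<forall>q. j \<le> q \<and> q < j + m \<longrightarrow> a i q = a i j) \<and>
     (2 \<le> j \<longrightarrow> a i (j - 1) \<noteq> a i j) \<and> (j + m \<le> i \<longrightarrow> a i (j + m) \<noteq> a i j)"

lemma
  assumes "maximal_run a i j m"
  shows maximal_run_start: "1 \<le> j"
    and maximal_run_end: "j + m \<le> Suc i"
    and maximal_run_entry: "j \<le> q \<Longrightarrow> q < j + m \<Longrightarrow> a i q = a i j"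
    and maximal_run_left: "2 \<le> j \<Longrightarrow> a i (j - 1) \<noteq> a i j"
    and maximal_run_right: "j + m \<le> i \<Longrightarrow> a i (j + m) \<noteq> a i j"
  using assms unfolding maximal_run_def by blast+

lemma maximal_run_2_iff:
  "maximal_run a i j 2 \<longleftrightarrow> 1 \<le> j \<and> Suc j \<le> i \<and> a i (Suc j) = a i j \<and>
     (2 \<le> j \<longrightarrow> a i (j - 1) \<noteq> a i j) \<and> (Suc (Suc j) \<le> i \<longrightarrow> a i (Suc (Suc j)) \<noteq> a i j)"
proof -
  have "(\<forall>q. j \<le> q \<and> q < j + 2 \<longrightarrow> a i q = a i j) \<longleftrightarrow> a i (Suc j) = a i j"
  proof
    assume run: "\<forall>q. j \<le> q \<and> q < j + 2 \<longrightarrow> a i q = a i j"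
    show "a i (Suc j) = a i j"
      using run[rule_format, of "Suc j"] by simp
  next
    assume "a i (Suc j) = a i j"
    moreover have "j \<le> q \<and> q < j + 2 \<longleftrightarrow> q = j \<or> q = Suc j" for q
      by auto
    ultimately show "\<forall>q. j \<le> q \<and> q < j + 2 \<longrightarrow> a i q = a i j"
      by auto
  qed
  then show ?thesis
    unfolding maximal_run_def by (simp add: Suc_le_eq)
qed

lemma maximal_run_3_iff:
  "maximal_run a i j 3 \<longleftrightarrow> 1 \<le> j \<and> Suc (Suc j) \<le> i \<and> a i (Suc j) = a i j \<and> a i (Suc (Suc j)) = a i j \<and>
     (2 \<le> j \<longrightarrow> a i (j - 1) \<noteq> a i j) \<and> (Suc (Suc (Suc j)) \<le> i \<longrightarrow> a i (Suc (Suc (Suc j))) \<noteq> a i j)"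
proof -
  have "(\<forall>q. j \<le> q \<and> q < j + 3 \<longrightarrow> a i q = a i j) \<longleftrightarrow>
      a i (Suc j) = a i j \<and> a i (Suc (Suc j)) = a i j"
  proof
    assume run: "\<forall>q. j \<le> q \<and> q < j + 3 \<longrightarrow> a i q = a i j"
    show "a i (Suc j) = a i j \<and> a i (Suc (Suc j)) = a i j"
      using run[rule_format, of "Suc j"] run[rule_format, of "Suc (Suc j)"] by simp
  next
    assume "a i (Suc j) = a i j \<and> a i (Suc (Suc j)) = a i j"
    moreover have "j \<le> q \<and> q < j + 3 \<longleftrightarrow> q = j \<or> q = Suc j \<or> q = Suc (Suc j)" for q
      by auto
    ultimately show "\<forall>q. j \<le> q \<and> q < j + 3 \<longrightarrow> a i q = a i j"
      by auto
  qed
  then show ?thesis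
    unfolding maximal_run_def by (simp add: Suc_le_eq eval_nat_numeral)
qed

lemma maximal_run_unique:
  assumes "maximal_run a i j m" "maximal_run a i j' m'"
    and "j \<le> p" "p < j + m" "j' \<le> p" "p < j' + m'"
  shows "j = j'" "m = m'"
proof -
  have start: "\<not> j < j'" if "maximal_run a i j m" "maximal_run a i j' m'"
    "j \<le> p" "p < j + m" "j' \<le> p" "p < j' + m'" for j m j' m'
  proof
    assume "j < j'"
    have "a i (j' - 1) = a i j" "a i p = a i j" "a i p = a i j'"
      using maximal_run_entry[OF that(1), of "j' - 1"] maximal_run_entry[OF that(1), of p]
        maximal_run_entry[OF that(2), of p] that(3-6) \<open>j < j'\<close> by simp_all
    moreover have "a i (j' - 1) \<noteq> a i j'"
      using maximal_run_left[OF that(2)] maximal_run_start[OF that(1)] \<open>j < j'\<close> by simp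
    ultimately show False
      by simp
  qed
  show "j = j'"
    using start[OF assms] start[OF assms(2,1,5,6,3,4)] by linarith
  have length: "\<not> m < m'" if "maximal_run a i j m" "maximal_run a i j m'" for m m'
  proof
    assume "m < m'"
    then have "a i (j + m) = a i j" "j + m \<le> i"
      using maximal_run_entry[OF that(2), of "j + m"] maximal_run_end[OF that(2)] by simp_all
    then show False
      using maximal_run_right[OF that(1)] by simp
  qed
  show "m = m'"
    using length[of m m'] length[of m' m] assms(1,2) \<open>j = j'\<close> by fastforce
qed

(* The arrowed conditions, like special little triangles, only relate horizontally adjacent
   equal entries, and a maximal run is separated from the rest of its row by unequal ones. *)
lemma arrowed_at_outside_run:
  assumes run: "maximal_run a i j m"
    and agree: "\<And>i' q. i' \<noteq> i \<or> q < j \<or> j + m \<le> q \<Longrightarrow> d' i' q = d i' q"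
    and outside: "i' \<noteq> i \<or> p < j \<or> j + m \<le> p"
    and "arrowed_at n a d i' p"
  shows "arrowed_at n a d' i' p"
proof -
  have same: "d' i' p = d i' p"
    using agree outside by blast
  have ne: "d' i' (Suc p) = d i' (Suc p)" if "a i' (Suc p) = a i' p" "1 \<le> p"
  proof (rule agree, rule ccontr)
    assume "\<not> (i' \<noteq> i \<or> Suc p < j \<or> j + m \<le> Suc p)"
    then have "i' = i" "j = Suc p"
      using outside by auto
    then show False
      using that maximal_run_left[OF run] by simp
  qed
  have nw: "d' i' (p - 1) = d i' (p - 1)" if "a i' (p - 1) = a i' p" "2 \<le> p" "p \<le> i'"
  proof (rule agree, rule ccontr)
    assume "\<not> (i' \<noteq> i \<or> p - 1 < j \<or> j + m \<le> p - 1)"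
    then have "i' = i" "p = j + m" "j \<le> p - 1"
      using outside by auto
    then show False
      using that maximal_run_entry[OF run, of "p - 1"] maximal_run_right[OF run]
        maximal_run_start[OF run] by simp
  qed
  show ?thesis
    unfolding arrowed_at_def
  proof (rule conjI; rule impI)
    assume "in_tri n i' p \<and> 2 \<le> i' \<and> p < i' \<and> a i' p = a (i' - 1) p \<and> has_ne (d' i' p)"
    then show "a i' (Suc p) = a i' p \<and> has_nw (d' i' (Suc p))"
      using assms(4) same ne unfolding arrowed_at_def in_tri_def by auto
  next
    assume "in_tri n i' p \<and> 2 \<le> i' \<and> 2 \<le> p \<and> a i' p = a (i' - 1) (p - 1) \<and> has_nw (d' i' p)"
    then show "a i' (p - 1) = a i' p \<and> has_ne (d' i' (p - 1))"
      using assms(4) same nw unfolding arrowed_at_def in_tri_def by auto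
  qed
qed

lemma arrowed_cond_update_run:
  assumes "arrowed_cond n a d" "maximal_run a i j m"
    and "\<And>i' q. i' \<noteq> i \<or> q < j \<or> j + m \<le> q \<Longrightarrow> d' i' q = d i' q"
    and "\<And>q. j \<le> q \<Longrightarrow> q < j + m \<Longrightarrow> arrowed_at n a d' i q"
  shows "arrowed_cond n a d'"
proof -
  have "arrowed_at n a d' i' q" for i' q
  proof (cases "i' \<noteq> i \<or> q < j \<or> j + m \<le> q")
    case True
    then show ?thesis
      using arrowed_at_outside_run[where d = d and d' = d', OF assms(2,3) True] assms(1)
      unfolding arrowed_cond_iff_arrowed_at by blast
  next
    case False
    then show ?thesis
      using assms(4) by auto
  qed
  then show ?thesis
    unfolding arrowed_cond_iff_arrowed_at by blast
qed

lemma special_triangles_outside_run: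
  assumes run: "maximal_run a i j m"
    and agree: "\<And>i' q. i' \<noteq> i \<or> q < j \<or> j + m \<le> q \<Longrightarrow> d' i' q = d i' q"
    and outside: "(p, q) \<notin> {i - 1} \<times> {j..<j + m - 1}"
  shows "(p, q) \<in> special_triangles n a d' \<longleftrightarrow> (p, q) \<in> special_triangles n a d"
proof (cases "d' (Suc p) q = d (Suc p) q \<and> d' (Suc p) (Suc q) = d (Suc p) (Suc q)")
  case True
  then show ?thesis
    unfolding special_triangles_def by simp
next
  case False
  then have "Suc p = i"
    using agree by metis
  moreover have "j \<le> q \<and> q < j + m \<or> j \<le> Suc q \<and> Suc q < j + m"
    using False agree \<open>Suc p = i\<close> by (metis not_le)
  moreover have "\<not> (j \<le> q \<and> q < j + m - 1)"
    using outside \<open>Suc p = i\<close> by auto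
  ultimately have "Suc q = j \<or> q = j + m - 1"
    by linarith
  have "a i q \<noteq> a i (Suc q)" if "in_tri n p q"
  proof (cases "Suc q = j")
    case True
    then show ?thesis
      using that maximal_run_left[OF run] unfolding in_tri_def by auto
  next
    case False
    then have "j \<le> q" "q < j + m" "Suc q = j + m" "j + m \<le> i"
      using \<open>Suc q = j \<or> q = j + m - 1\<close> that \<open>Suc p = i\<close> unfolding in_tri_def by auto
    then show ?thesis
      using maximal_run_entry[OF run, of q] maximal_run_right[OF run] by simp
  qed
  then show ?thesis
    using \<open>Suc p = i\<close> unfolding special_triangles_def by auto
qed

lemma special_triangle_above_run:
  assumes "gt_pattern n k a" "maximal_run a i j m" "i \<le> n" "j \<le> q" "Suc q < j + m"
  shows "(i - 1, q) \<in> special_triangles n a e \<longleftrightarrow> has_ne (e i q) \<and> has_nw (e i (Suc q))"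
proof -
  have q: "1 \<le> q" "q < i" "2 \<le> i"
    using maximal_run_start[OF assms(2)] maximal_run_end[OF assms(2)] assms(4,5) by auto
  have eq: "a i (Suc q) = a i q"
    using maximal_run_entry[OF assms(2), of q] maximal_run_entry[OF assms(2), of "Suc q"] assms(4,5)
    by simp
  then have "a (i - 1) q = a i q"
    using gt_pattern_interlacing[OF assms(1) q(3) assms(3) q(1,2)] by simp
  then show ?thesis
    using q eq assms(3) unfolding special_triangles_def in_tri_def by auto
qed

section \<open>Sites and toggling\<close>

definition pair_block :: "nat \<Rightarrow> entries \<Rightarrow> nat \<Rightarrow> nat \<Rightarrow> bool" where
  "pair_block n a i j \<longleftrightarrow> i \<le> n \<and> maximal_run a i j 2"

definition triple_block :: "nat \<Rightarrow> entries \<Rightarrow> nat \<Rightarrow> nat \<Rightarrow> bool" where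
  "triple_block n a i j \<longleftrightarrow> i \<le> n \<and> maximal_run a i j 3 \<and> maximal_run a (i - 1) j 2"

lemma pair_block_not_triple_block: "pair_block n a i j \<Longrightarrow> \<not> triple_block n a i j"
  unfolding pair_block_def triple_block_def
  using maximal_run_unique(2)[of a i j 2 j 3 j] maximal_run_start by fastforce

lemma triple_block_entries:
  assumes "gt_pattern n k a" "triple_block n a i j"
  shows "1 \<le> j" "Suc (Suc j) \<le> i" "i \<le> n"
    and "a i (Suc j) = a i j" "a i (Suc (Suc j)) = a i j"
    and "a (i - 1) j = a i j" "a (i - 1) (Suc j) = a i j"
    and "2 \<le> j \<Longrightarrow> a (i - 1) (j - 1) \<noteq> a i j"
    and "Suc (Suc j) < i \<Longrightarrow> a (i - 1) (Suc (Suc j)) \<noteq> a i j"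
proof -
  have row: "1 \<le> j" "Suc (Suc j) \<le> i" "i \<le> n" "a i (Suc j) = a i j" "a i (Suc (Suc j)) = a i j"
    and above: "2 \<le> j \<Longrightarrow> a (i - 1) (j - 1) \<noteq> a (i - 1) j"
      "Suc (Suc j) < i \<Longrightarrow> a (i - 1) (Suc (Suc j)) \<noteq> a (i - 1) j"
    using assms(2) unfolding triple_block_def maximal_run_2_iff maximal_run_3_iff by auto
  moreover note equal = gt_pattern_three_equal_above[OF assms(1) row]
  ultimately show "1 \<le> j" "Suc (Suc j) \<le> i" "i \<le> n"
    "a i (Suc j) = a i j" "a i (Suc (Suc j)) = a i j" "a (i - 1) j = a i j" "a (i - 1) (Suc j) = a i j"
    "2 \<le> j \<Longrightarrow> a (i - 1) (j - 1) \<noteq> a i j"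
    "Suc (Suc j) < i \<Longrightarrow> a (i - 1) (Suc (Suc j)) \<noteq> a i j"
    by simp_all
qed

definition pair_word :: "dec \<Rightarrow> dec \<Rightarrow> bool" where
  "pair_word x y \<longleftrightarrow> (x, y) = (NoDec, NoDec) \<or> (x, y) = (NE, NW)"

definition triple_word :: "dec \<Rightarrow> dec \<Rightarrow> dec \<Rightarrow> bool" where
  "triple_word x y z \<longleftrightarrow> Both \<notin> {x, y, z} \<and> (has_ne x \<longleftrightarrow> has_nw y) \<and> (has_ne y \<longleftrightarrow> has_nw z)"

definition toggle_pair :: "dec \<times> dec \<Rightarrow> dec \<times> dec" where
  "toggle_pair w =
     (if w = (NoDec, NoDec) then (NE, NW) else if w = (NE, NW) then (NoDec, NoDec) else w)"

(* Any pairing of the eight triple words that switches whether the middle letter is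
   decorated would do. *)
definition toggle_triple :: "dec \<times> dec \<times> dec \<Rightarrow> dec \<times> dec \<times> dec" where
  "toggle_triple w =
     (if w = (NoDec, NoDec, NoDec) then (NE, NW, NoDec)
      else if w = (NE, NW, NoDec) then (NoDec, NoDec, NoDec)
      else if w = (NoDec, NoDec, NE) then (NE, NW, NE)
      else if w = (NE, NW, NE) then (NoDec, NoDec, NE)
      else if w = (NW, NoDec, NoDec) then (NW, NE, NW)
      else if w = (NW, NE, NW) then (NW, NoDec, NoDec)
      else if w = (NW, NoDec, NE) then (NoDec, NE, NW)
      else if w = (NoDec, NE, NW) then (NW, NoDec, NE)
      else w)"

lemma toggle_pair_toggle_pair [simp]: "toggle_pair (toggle_pair w) = w"
  by (cases w) (auto simp: toggle_pair_def)

lemma toggle_triple_toggle_triple [simp]: "toggle_triple (toggle_triple w) = w"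
  by (cases w) (auto simp: toggle_triple_def)

lemma toggle_pair_word:
  assumes "pair_word x y" "toggle_pair (x, y) = (x', y')"
  shows "pair_word x' y'" "y' = NoDec \<longleftrightarrow> y \<noteq> NoDec"
  using assms by (auto simp: pair_word_def toggle_pair_def)

lemma toggle_triple_word:
  assumes "triple_word x y z" "toggle_triple (x, y, z) = (x', y', z')"
  shows "triple_word x' y' z'" "y' = NoDec \<longleftrightarrow> y \<noteq> NoDec"
  using assms
  by (cases x; cases y; cases z; auto simp: triple_word_def toggle_triple_def has_ne_def has_nw_def)+

lemma pair_block_arrowed_at:
  assumes "pair_block n a i j" "pair_word (e i j) (e i (Suc j))"
  shows "arrowed_at n a e i j" "arrowed_at n a e i (Suc j)"
proof -
  have "a i (Suc j) = a i j"
    using assms(1) unfolding pair_block_def maximal_run_2_iff by simp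
  then show "arrowed_at n a e i j" "arrowed_at n a e i (Suc j)"
    using assms(2) unfolding arrowed_at_def pair_word_def has_ne_def has_nw_def by auto
qed

lemma triple_block_arrowed_at_iff:
  assumes "gt_pattern n k a" "triple_block n a i j"
  shows "(\<forall>q \<in> {j, Suc j, Suc (Suc j)}. arrowed_at n a e i q) \<longleftrightarrow>
    (has_ne (e i j) \<longleftrightarrow> has_nw (e i (Suc j))) \<and> (has_ne (e i (Suc j)) \<longleftrightarrow> has_nw (e i (Suc (Suc j))))"
  using triple_block_entries[OF assms] unfolding arrowed_at_def in_tri_def
  by (cases "Suc (Suc j) < i") auto

definition sites :: "nat \<Rightarrow> entries \<Rightarrow> decorations \<Rightarrow> (nat \<times> nat) set" where
  "sites n a d =
     {(i, j). pair_block n a i j \<and> pair_word (d i j) (d i (Suc j)) \<or> triple_block n a i j}"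

definition site_length :: "nat \<Rightarrow> entries \<Rightarrow> nat \<Rightarrow> nat \<Rightarrow> nat" where
  "site_length n a i j = (if triple_block n a i j then 3 else 2)"

definition toggle_site :: "nat \<Rightarrow> entries \<Rightarrow> decorations \<Rightarrow> nat \<Rightarrow> nat \<Rightarrow> decorations" where
  "toggle_site n a d i j =
     (if triple_block n a i j then
        (case toggle_triple (d i j, d i (Suc j), d i (Suc (Suc j))) of
          (x, y, z) \<Rightarrow> d(i := (d i)(j := x, Suc j := y, Suc (Suc j) := z)))
      else
        (case toggle_pair (d i j, d i (Suc j)) of
          (x, y) \<Rightarrow> d(i := (d i)(j := x, Suc j := y))))"

lemma toggle_site_toggle_site: "toggle_site n a (toggle_site n a d i j) i j = d"
proof (cases "triple_block n a i j")
  case True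
  obtain x y z where w: "toggle_triple (d i j, d i (Suc j), d i (Suc (Suc j))) = (x, y, z)"
    by (metis prod_cases3)
  then have "toggle_triple (x, y, z) = (d i j, d i (Suc j), d i (Suc (Suc j)))"
    by (metis toggle_triple_toggle_triple)
  then show ?thesis
    using True w unfolding toggle_site_def by (simp add: fun_eq_iff)
next
  case False
  obtain x y where w: "toggle_pair (d i j, d i (Suc j)) = (x, y)"
    by fastforce
  then have "toggle_pair (x, y) = (d i j, d i (Suc j))"
    by (metis toggle_pair_toggle_pair)
  then show ?thesis
    using False w unfolding toggle_site_def by (simp add: fun_eq_iff)
qed

lemma toggle_site_outside:
  "i' \<noteq> i \<or> q < j \<or> j + site_length n a i j \<le> q \<Longrightarrow> toggle_site n a d i j i' q = d i' q"
  unfolding toggle_site_def site_length_def by (auto split: prod.split)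

lemma toggle_site_triple:
  "triple_block n a i j \<Longrightarrow>
    (toggle_site n a d i j i j, toggle_site n a d i j i (Suc j),
      toggle_site n a d i j i (Suc (Suc j))) = toggle_triple (d i j, d i (Suc j), d i (Suc (Suc j)))"
  unfolding toggle_site_def by (auto split: prod.split)

lemma toggle_site_pair:
  "\<not> triple_block n a i j \<Longrightarrow>
    (toggle_site n a d i j i j, toggle_site n a d i j i (Suc j)) = toggle_pair (d i j, d i (Suc j))"
  unfolding toggle_site_def by (auto split: prod.split)

lemma site_maximal_run:
  assumes "(i, j) \<in> sites n a d"
  shows "i \<le> n" "maximal_run a i j (site_length n a i j)"
  using assms unfolding sites_def site_length_def pair_block_def triple_block_def by auto

lemma pair_block_apart_from_site:
  assumes "pair_block n a i' j'" "(i, j) \<in> sites n a d" "(i', j') \<noteq> (i, j)"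
  shows "i' \<noteq> i \<or> Suc j' < j \<or> j + site_length n a i j \<le> j'"
proof (rule ccontr)
  assume "\<not> ?thesis"
  then have "i' = i" "j' \<le> j \<and> j \<le> Suc j' \<or> j \<le> j' \<and> j' < j + site_length n a i j"
    by auto
  moreover have "2 \<le> site_length n a i j"
    unfolding site_length_def by simp
  ultimately obtain p where "j \<le> p" "p < j + site_length n a i j" "j' \<le> p" "p < j' + 2"
  proof (elim disjE conjE)
    assume "j' \<le> j" "j \<le> Suc j'" "2 \<le> site_length n a i j"
    then show ?thesis
      using that[of j] by simp
  next
    assume "j \<le> j'" "j' < j + site_length n a i j"
    then show ?thesis
      using that[of j'] by simp
  qed
  then have "j = j'"
    using maximal_run_unique(1)[OF site_maximal_run(2)[OF assms(2)], of j' 2] assms(1)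
    unfolding pair_block_def by (simp add: \<open>i' = i\<close>)
  then show False
    using assms(3) \<open>i' = i\<close> by simp
qed

lemma sites_toggle_site:
  assumes "(i, j) \<in> sites n a d"
  shows "sites n a (toggle_site n a d i j) = sites n a d"
proof -
  define d' where "d' = toggle_site n a d i j"
  have "pair_word (d' i' j') (d' i' (Suc j')) \<longleftrightarrow> pair_word (d i' j') (d i' (Suc j'))"
    if "pair_block n a i' j'" for i' j'
  proof (cases "(i', j') = (i, j)")
    case True
    then have "\<not> triple_block n a i j"
      using pair_block_not_triple_block that by simp
    then have "pair_word (d i j) (d i (Suc j))"
      using assms unfolding sites_def by simp
    moreover have "pair_word (d' i j) (d' i (Suc j))"
      using toggle_pair_word(1)[OF calculation toggle_site_pair[of n a i j d, symmetric]]
        \<open>\<not> triple_block n a i j\<close> unfolding d'_def by simp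
    ultimately show ?thesis
      using True by simp
  next
    case False
    note apart = pair_block_apart_from_site[OF that assms False]
    have "d' i' j' = d i' j'" "d' i' (Suc j') = d i' (Suc j')"
      unfolding d'_def by (intro toggle_site_outside, use apart in linarith)+
    then show ?thesis
      by simp
  qed
  then have "{(i, j). pair_block n a i j \<and> pair_word (d' i j) (d' i (Suc j)) \<or> triple_block n a i j}
      = {(i, j). pair_block n a i j \<and> pair_word (d i j) (d i (Suc j)) \<or> triple_block n a i j}"
    by blast
  then show ?thesis
    unfolding sites_def d'_def .
qed

definition site_word_valid :: "nat \<Rightarrow> entries \<Rightarrow> decorations \<Rightarrow> nat \<Rightarrow> nat \<Rightarrow> bool" where
  "site_word_valid n a d i j \<longleftrightarrow>
     (if triple_block n a i j then triple_word (d i j) (d i (Suc j)) (d i (Suc (Suc j)))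
      else pair_word (d i j) (d i (Suc j)))"

lemma arrowed_site_word_valid:
  assumes "gt_pattern n k a" "arrowed_cond n a d" "no_double n d" "(i, j) \<in> sites n a d"
  shows "site_word_valid n a d i j"
proof (cases "triple_block n a i j")
  case True
  note entries = triple_block_entries[OF assms(1) True]
  have "\<forall>q \<in> {j, Suc j, Suc (Suc j)}. arrowed_at n a d i q"
    using assms(2) unfolding arrowed_cond_iff_arrowed_at by blast
  then have "(has_ne (d i j) \<longleftrightarrow> has_nw (d i (Suc j))) \<and>
      (has_ne (d i (Suc j)) \<longleftrightarrow> has_nw (d i (Suc (Suc j))))"
    using triple_block_arrowed_at_iff[OF assms(1) True, of d] by blast
  moreover have "d i j \<noteq> Both" "d i (Suc j) \<noteq> Both" "d i (Suc (Suc j)) \<noteq> Both"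
    using assms(3) entries(1-3) unfolding no_double_def in_tri_def by auto
  ultimately show ?thesis
    using True unfolding site_word_valid_def triple_word_def by auto
next
  case False
  then show ?thesis
    using assms(4) unfolding site_word_valid_def sites_def by simp
qed

lemma toggle_site_word_valid:
  assumes "site_word_valid n a d i j"
  shows "site_word_valid n a (toggle_site n a d i j) i j"
    and "toggle_site n a d i j i (Suc j) = NoDec \<longleftrightarrow> d i (Suc j) \<noteq> NoDec"
proof -
  have "site_word_valid n a (toggle_site n a d i j) i j \<and>
      (toggle_site n a d i j i (Suc j) = NoDec \<longleftrightarrow> d i (Suc j) \<noteq> NoDec)"
  proof (cases "triple_block n a i j")
    case True
    then show ?thesis
      using assms toggle_triple_word[OF _ toggle_site_triple[OF True, symmetric]]
      unfolding site_word_valid_def by simp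
  next
    case False
    then show ?thesis
      using assms toggle_pair_word[OF _ toggle_site_pair[OF False, symmetric]]
      unfolding site_word_valid_def by simp
  qed
  then show "site_word_valid n a (toggle_site n a d i j) i j"
    "toggle_site n a d i j i (Suc j) = NoDec \<longleftrightarrow> d i (Suc j) \<noteq> NoDec"
    by simp_all
qed

lemma arrowed_at_site:
  assumes "gt_pattern n k a" "(i, j) \<in> sites n a e" "site_word_valid n a e i j"
    and "j \<le> q" "q < j + site_length n a i j"
  shows "arrowed_at n a e i q"
proof (cases "triple_block n a i j")
  case True
  then have "q \<in> {j, Suc j, Suc (Suc j)}"
    using assms(4,5) unfolding site_length_def by auto
  then show ?thesis
    using True assms(3) triple_block_arrowed_at_iff[OF assms(1) True, of e]
    unfolding site_word_valid_def triple_word_def by auto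
next
  case False
  then have "q = j \<or> q = Suc j" "pair_block n a i j"
    using assms(2,4,5) unfolding site_length_def sites_def by auto
  then show ?thesis
    using False assms(3) pair_block_arrowed_at[of n a i j e]
    unfolding site_word_valid_def by auto
qed

lemma toggle_site_arrowed_cond:
  assumes "gt_pattern n k a" "arrowed_cond n a d" "(i, j) \<in> sites n a d" "site_word_valid n a d i j"
  shows "arrowed_cond n a (toggle_site n a d i j)"
proof (rule arrowed_cond_update_run[OF assms(2) site_maximal_run(2)[OF assms(3)]])
  show "toggle_site n a d i j i' q = d i' q"
    if "i' \<noteq> i \<or> q < j \<or> j + site_length n a i j \<le> q" for i' q
    using toggle_site_outside[OF that] .
  show "arrowed_at n a (toggle_site n a d i j) i q" if "j \<le> q" "q < j + site_length n a i j" for q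
    using arrowed_at_site[OF assms(1) _ toggle_site_word_valid(1)[OF assms(4)] that]
      sites_toggle_site[OF assms(3)] assms(3) by simp
qed

lemma toggle_site_no_double:
  assumes "no_double n d" "site_word_valid n a d i j"
  shows "no_double n (toggle_site n a d i j)"
proof -
  have "toggle_site n a d i j i q \<noteq> Both" if "j \<le> q" "q < j + site_length n a i j" for q
  proof (cases "triple_block n a i j")
    case True
    then have "q = j \<or> q = Suc j \<or> q = Suc (Suc j)"
      using that unfolding site_length_def by auto
    then show ?thesis
      using True toggle_site_word_valid(1)[OF assms(2)]
      unfolding site_word_valid_def triple_word_def by auto
  next
    case False
    then have "q = j \<or> q = Suc j"
      using that unfolding site_length_def by auto
    then show ?thesis
      using False toggle_site_word_valid(1)[OF assms(2)]
      unfolding site_word_valid_def pair_word_def by auto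
  qed
  then show ?thesis
    using assms(1) toggle_site_outside[of i' i q j n a d for i' q]
    unfolding no_double_def by (metis not_le)
qed

lemma toggle_site_dec_normal:
  assumes "dec_normal n d" "(i, j) \<in> sites n a d"
  shows "dec_normal n (toggle_site n a d i j)"
proof -
  have "i' \<noteq> i \<or> q < j \<or> j + site_length n a i j \<le> q" if "\<not> in_tri n i' q" for i' q
    using that site_maximal_run(1)[OF assms(2)]
      maximal_run_start[OF site_maximal_run(2)[OF assms(2)]]
      maximal_run_end[OF site_maximal_run(2)[OF assms(2)]]
    unfolding in_tri_def by linarith
  then show ?thesis
    using assms(1) toggle_site_outside[of i' i q j n a d for i' q] unfolding dec_normal_def by metis
qed

lemma card_special_triangles_at_site:
  assumes "gt_pattern n k a" "(i, j) \<in> sites n a e" "site_word_valid n a e i j"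
  shows "card (special_triangles n a e \<inter> {i - 1} \<times> {j..<j + site_length n a i j - 1}) =
    of_bool (e i (Suc j) \<noteq> NoDec)"
proof -
  have above: "(i - 1, q) \<in> special_triangles n a e \<longleftrightarrow> has_ne (e i q) \<and> has_nw (e i (Suc q))"
    if "j \<le> q" "Suc q < j + site_length n a i j" for q
    using special_triangle_above_run[OF assms(1) site_maximal_run(2)[OF assms(2)]
        site_maximal_run(1)[OF assms(2)] that] .
  show ?thesis
  proof (cases "triple_block n a i j")
    case True
    then have "{i - 1} \<times> {j..<j + site_length n a i j - 1} = {(i - 1, j), (i - 1, Suc j)}"
      unfolding site_length_def by auto
    moreover have "card (special_triangles n a e \<inter> {(i - 1, j), (i - 1, Suc j)}) =
        of_bool ((i - 1, j) \<in> special_triangles n a e) +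
        of_bool ((i - 1, Suc j) \<in> special_triangles n a e)"
      by (auto simp: Int_insert_right)
    moreover have "site_length n a i j = 3"
      using True unfolding site_length_def by simp
    ultimately show ?thesis
      using True assms(3) above[of j] above[of "Suc j"]
      by (cases "e i j"; cases "e i (Suc j)"; cases "e i (Suc (Suc j))")
        (simp_all add: site_word_valid_def triple_word_def has_ne_def has_nw_def)
  next
    case False
    then have "{i - 1} \<times> {j..<j + site_length n a i j - 1} = {(i - 1, j)}" "site_length n a i j = 2"
      unfolding site_length_def by auto
    then show ?thesis
      using False assms(3) above[of j]
      by (auto simp: Int_insert_right site_word_valid_def pair_word_def has_ne_def has_nw_def)
  qed
qed

lemma toggle_site_special_triangles_sign:
  assumes "gt_pattern n k a" "(i, j) \<in> sites n a d" "site_word_valid n a d i j"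
  shows "(-1::int) ^ card (special_triangles n a (toggle_site n a d i j)) =
    - ((-1) ^ card (special_triangles n a d))"
proof (rule minus_one_power_card_odd_change[OF finite_special_triangles finite_special_triangles])
  define Q where "Q = {i - 1} \<times> {j..<j + site_length n a i j - 1}"
  show "special_triangles n a (toggle_site n a d i j) - Q = special_triangles n a d - Q"
  proof (rule set_eqI)
    fix t :: "nat \<times> nat"
    show "t \<in> special_triangles n a (toggle_site n a d i j) - Q \<longleftrightarrow> t \<in> special_triangles n a d - Q"
      using special_triangles_outside_run[OF site_maximal_run(2)[OF assms(2)] toggle_site_outside,
          where p = "fst t" and q = "snd t"]
      unfolding Q_def by auto
  qed
  have "card (special_triangles n a (toggle_site n a d i j) \<inter> Q) =
      of_bool (toggle_site n a d i j i (Suc j) \<noteq> NoDec)"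
    using card_special_triangles_at_site[OF assms(1) _ toggle_site_word_valid(1)[OF assms(3)]]
      sites_toggle_site[OF assms(2)] assms(2) unfolding Q_def by simp
  moreover have "card (special_triangles n a d \<inter> Q) = of_bool (d i (Suc j) \<noteq> NoDec)"
    using card_special_triangles_at_site[OF assms] unfolding Q_def .
  ultimately show "odd (card (special_triangles n a (toggle_site n a d i j) \<inter> Q) +
      card (special_triangles n a d \<inter> Q))"
    using toggle_site_word_valid(2)[OF assms(3)] by simp
qed

section \<open>Patterns without sites\<close>

lemma triple_blockI:
  assumes "gt_pattern n k a" "1 \<le> j" "Suc (Suc j) \<le> i" "i \<le> n"
    and "a i (Suc j) = a i j" "a i (Suc (Suc j)) = a i j"
    and "2 \<le> j \<Longrightarrow> a (i - 1) (j - 1) \<noteq> a i j"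
    and "Suc (Suc j) < i \<Longrightarrow> a (i - 1) (Suc (Suc j)) \<noteq> a i j"
  shows "triple_block n a i j"
proof -
  have "2 \<le> i"
    using assms(2,3) by simp
  note interlacing = gt_pattern_interlacing[OF assms(1) this assms(4)]
  have "a i (j - 1) \<noteq> a i j" if "2 \<le> j"
  proof -
    have "a i (j - 1) \<le> a (i - 1) (j - 1)" "a (i - 1) (j - 1) \<le> a i j"
      using interlacing[of "j - 1"] that assms(3) by simp_all
    then show ?thesis
      using assms(7)[OF that] by linarith
  qed
  moreover have "a i (Suc (Suc (Suc j))) \<noteq> a i j" if "Suc (Suc (Suc j)) \<le> i"
  proof -
    have "a i (Suc (Suc j)) \<le> a (i - 1) (Suc (Suc j))"
      "a (i - 1) (Suc (Suc j)) \<le> a i (Suc (Suc (Suc j)))"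
      using interlacing[of "Suc (Suc j)"] that by simp_all
    then show ?thesis
      using assms(6,8) that by fastforce
  qed
  ultimately show ?thesis
    unfolding triple_block_def maximal_run_2_iff maximal_run_3_iff
    using assms gt_pattern_three_equal_above[OF assms(1-6)] by auto
qed

lemma exists_triple_block:
  assumes "gt_pattern n k a" "1 \<le> j" "Suc (Suc j) \<le> i" "i \<le> n"
    and "a i (Suc j) = a i j" "a i (Suc (Suc j)) = a i j"
  shows "\<exists>i' j'. triple_block n a i' j'"
  using assms(2-)
proof (induction i arbitrary: j rule: less_induct)
  case (less i)
  note above = gt_pattern_three_equal_above[OF assms(1) less.prems]
  consider (left) "2 \<le> j" "a (i - 1) (j - 1) = a i j"
    | (right) "Suc (Suc j) < i" "a (i - 1) (Suc (Suc j)) = a i j"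
    | (here) "2 \<le> j \<Longrightarrow> a (i - 1) (j - 1) \<noteq> a i j"
        "Suc (Suc j) < i \<Longrightarrow> a (i - 1) (Suc (Suc j)) \<noteq> a i j"
    by blast
  then show ?case
  proof cases
    case left
    then have "1 \<le> j - 1" "Suc (Suc (j - 1)) \<le> i - 1" "i - 1 < i" "i - 1 \<le> n"
      "a (i - 1) (Suc (j - 1)) = a (i - 1) (j - 1)"
      "a (i - 1) (Suc (Suc (j - 1))) = a (i - 1) (j - 1)"
      using less.prems above by auto
    then show ?thesis
      by (intro less.IH)
  next
    case right
    then have "Suc (Suc j) \<le> i - 1" "i - 1 < i" "i - 1 \<le> n"
      "a (i - 1) (Suc j) = a (i - 1) j" "a (i - 1) (Suc (Suc j)) = a (i - 1) j"
      using less.prems above by auto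
    then show ?thesis
      using less.prems(1) by (intro less.IH)
  next
    case here
    then show ?thesis
      using triple_blockI[OF assms(1) less.prems] by blast
  qed
qed

lemma no_triple_block_equal_entries:
  assumes "gt_pattern n k a" "\<forall>i j. \<not> triple_block n a i j"
    and "i \<le> n" "1 \<le> j" "j < j'" "j' \<le> i" "a i j' = a i j"
  shows "j' = Suc j" "pair_block n a i j"
proof -
  have no_three: "\<not> (a i (Suc p) = a i p \<and> a i (Suc (Suc p)) = a i p)"
    if "1 \<le> p" "Suc (Suc p) \<le> i" for p
    using exists_triple_block[OF assms(1) that assms(3)] assms(2) by blast
  show "j' = Suc j"
  proof (rule ccontr)
    assume "j' \<noteq> Suc j"
    then have "Suc (Suc j) \<le> j'"
      using assms(5) by simp
    then have "a i (Suc j) = a i j" "a i (Suc (Suc j)) = a i j"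
      using gt_pattern_row_const[OF assms(1) assms(4) _ _ assms(6,3,7), of "Suc j"]
        gt_pattern_row_const[OF assms(1) assms(4) _ _ assms(6,3,7), of "Suc (Suc j)"] by simp_all
    then show False
      using no_three[OF assms(4)] \<open>Suc (Suc j) \<le> j'\<close> assms(6) by simp
  qed
  then have "a i (Suc j) = a i j"
    using assms(7) by simp
  moreover have "a i (j - 1) \<noteq> a i j" if "2 \<le> j"
  proof -
    have "Suc (j - 1) = j" "1 \<le> j - 1" "Suc (Suc (j - 1)) \<le> i"
      using that assms(6) \<open>j' = Suc j\<close> by auto
    then show ?thesis
      using no_three[of "j - 1"] \<open>a i (Suc j) = a i j\<close> by auto
  qed
  moreover have "a i (Suc (Suc j)) \<noteq> a i j" if "Suc (Suc j) \<le> i"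
    using no_three[OF assms(4) that] \<open>a i (Suc j) = a i j\<close> by simp
  ultimately show "pair_block n a i j"
    unfolding pair_block_def maximal_run_2_iff using assms(3-6) \<open>j' = Suc j\<close> by simp
qed

lemma no_triple_block_card_row_value:
  assumes "gt_pattern n k a" "\<forall>i j. \<not> triple_block n a i j" "i \<le> n"
  shows "card {j. 1 \<le> j \<and> j \<le> i \<and> a i j = x} \<le> 2"
proof -
  define S where "S = {j. 1 \<le> j \<and> j \<le> i \<and> a i j = x}"
  have "finite S"
    unfolding S_def by (rule finite_subset[of _ "{..i}"]) auto
  have "S \<subseteq> {Min S, Suc (Min S)}" if "S \<noteq> {}"
  proof
    fix r
    assume "r \<in> S"
    moreover have "Min S \<in> S" "Min S \<le> r"
      using Min_in[OF \<open>finite S\<close> that] Min_le[OF \<open>finite S\<close> \<open>r \<in> S\<close>] .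
    ultimately have "1 \<le> Min S" "r \<le> i" "a i r = a i (Min S)"
      unfolding S_def by auto
    then show "r \<in> {Min S, Suc (Min S)}"
      using no_triple_block_equal_entries(1)[OF assms, of "Min S" r] \<open>Min S \<le> r\<close>
      by (cases "Min S = r") auto
  qed
  then have "card S \<le> 2"
    using card_mono[of "{Min S, Suc (Min S)}" S] by (cases "S = {}") auto
  then show ?thesis
    unfolding S_def .
qed

lemma rhs_pattern_if_no_sites:
  assumes "gt_pattern n k a" "dec_normal n d" "arrowed_cond n a d" "no_double n d"
    and "sites n a d = {}"
  shows "(a, d) \<in> rhs_patterns n k"
proof -
  have no_triple: "\<forall>i j. \<not> triple_block n a i j"
    and no_pair: "\<And>i j. pair_block n a i j \<Longrightarrow> \<not> pair_word (d i j) (d i (Suc j))"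
    using assms(5) unfolding sites_def by auto
  have adjacent: "j' = Suc j \<and> pair_block n a i j"
    if "in_tri n i j" "in_tri n i j'" "j < j'" "a i j = a i j'" for i j j'
    using no_triple_block_equal_entries[OF assms(1) no_triple, of i j j'] that
    unfolding in_tri_def by auto
  have decorated: "d i j = dec"
    if "in_tri n i j" "dec \<noteq> Both" "d i j = dec \<or> d i j = Both" for i j dec
    using assms(4) that unfolding no_double_def by auto
  have ne: "d i j \<noteq> NE" if "in_tri n i j" "2 \<le> i" "j < i" "a i j = a (i - 1) j" for i j
  proof
    assume "d i j = NE"
    moreover have "arrowed_at n a d i j"
      using assms(3) unfolding arrowed_cond_iff_arrowed_at by blast
    ultimately have "a i (Suc j) = a i j" "has_nw (d i (Suc j))"
      using that unfolding arrowed_at_def has_ne_def by auto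
    moreover have "in_tri n i (Suc j)"
      using that unfolding in_tri_def by auto
    ultimately show False
      using adjacent[OF that(1) \<open>in_tri n i (Suc j)\<close>] no_pair \<open>d i j = NE\<close>
        decorated[of i "Suc j" NW] unfolding has_nw_def pair_word_def by auto
  qed
  have nw: "d i j \<noteq> NW" if "in_tri n i j" "2 \<le> i" "2 \<le> j" "a i j = a (i - 1) (j - 1)" for i j
  proof
    assume "d i j = NW"
    moreover have "arrowed_at n a d i j"
      using assms(3) unfolding arrowed_cond_iff_arrowed_at by blast
    ultimately have "a i (j - 1) = a i j" "has_ne (d i (j - 1))"
      using that unfolding arrowed_at_def has_nw_def by auto
    moreover have "in_tri n i (j - 1)"
      using that unfolding in_tri_def by auto
    moreover have "Suc (j - 1) = j"
      using that(3) by simp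
    ultimately show False
      using adjacent[OF \<open>in_tri n i (j - 1)\<close> that(1)] no_pair[of i "j - 1"] \<open>d i j = NW\<close> that(3)
        decorated[of i "j - 1" NE] unfolding has_ne_def pair_word_def by auto
  qed
  have undecorated: "d i j \<noteq> NoDec \<or> d i j' \<noteq> NoDec"
    if "in_tri n i j" "in_tri n i j'" "j < j'" "a i j = a i j'" for i j j'
    using adjacent[OF that] no_pair unfolding pair_word_def by auto
  have "card {j. 1 \<le> j \<and> j \<le> i \<and> a i j = x} \<le> 2" if "i \<le> n" for i x
    using no_triple_block_card_row_value[OF assms(1) no_triple that] .
  then show ?thesis
    unfolding rhs_patterns_def mem_Collect_eq case_prod_conv
    using assms(1,2,4) ne nw undecorated by blast
qed

lemma rhs_pattern_conditions:
  assumes "(a, d) \<in> rhs_patterns n k"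
  shows "gt_pattern n k a" "dec_normal n d" "no_double n d"
    and "\<And>i x. 1 \<le> i \<Longrightarrow> i \<le> n \<Longrightarrow> card {j. 1 \<le> j \<and> j \<le> i \<and> a i j = x} \<le> 2"
    and "\<And>i j. in_tri n i j \<Longrightarrow> 2 \<le> i \<Longrightarrow> j < i \<Longrightarrow> a i j = a (i - 1) j \<Longrightarrow> \<not> has_ne (d i j)"
    and "\<And>i j. in_tri n i j \<Longrightarrow> 2 \<le> i \<Longrightarrow> 2 \<le> j \<Longrightarrow> a i j = a (i - 1) (j - 1) \<Longrightarrow> \<not> has_nw (d i j)"
    and "\<And>i j j'. in_tri n i j \<Longrightarrow> in_tri n i j' \<Longrightarrow> j < j' \<Longrightarrow> a i j = a i j' \<Longrightarrow>
      d i j \<noteq> NoDec \<or> d i j' \<noteq> NoDec"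
  using assms unfolding rhs_patterns_def no_double_def has_ne_def has_nw_def by auto

lemma no_sites_if_rhs_pattern:
  assumes "(a, d) \<in> rhs_patterns n k"
  shows "sites n a d = {}"
proof -
  note rhs = rhs_pattern_conditions[OF assms]
  have "\<not> triple_block n a i j" for i j
  proof
    assume "triple_block n a i j"
    note entries = triple_block_entries[OF rhs(1) this]
    have "{j, Suc j, Suc (Suc j)} \<subseteq> {q. 1 \<le> q \<and> q \<le> i \<and> a i q = a i j}"
      using entries by auto
    then have "card {j, Suc j, Suc (Suc j)} \<le> card {q. 1 \<le> q \<and> q \<le> i \<and> a i q = a i j}"
      by (rule card_mono[rotated]) (rule finite_subset[of _ "{..i}"], auto)
    then show False
      using rhs(4)[of i "a i j"] entries by simp
  qed
  moreover have "\<not> pair_word (d i j) (d i (Suc j))" if "pair_block n a i j" for i j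
  proof -
    have "in_tri n i j" "in_tri n i (Suc j)" "2 \<le> i" "j < i" "a i (Suc j) = a i j"
      using that unfolding pair_block_def maximal_run_2_iff in_tri_def by auto
    moreover have "a (i - 1) j = a i j"
      using gt_pattern_interlacing[OF rhs(1) \<open>2 \<le> i\<close>, of j] calculation that
      unfolding pair_block_def in_tri_def by auto
    ultimately show ?thesis
      using rhs(5)[of i j] rhs(7)[of i j "Suc j"] unfolding pair_word_def has_ne_def by auto
  qed
  ultimately show ?thesis
    unfolding sites_def by auto
qed

lemma arrowed_cond_if_rhs_pattern:
  assumes "(a, d) \<in> rhs_patterns n k"
  shows "arrowed_cond n a d"
  using rhs_pattern_conditions(5,6)[OF assms] unfolding arrowed_cond_def by blast

lemma special_triangles_rhs_pattern:
  assumes "(a, d) \<in> rhs_patterns n k"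
  shows "special_triangles n a d = {}"
proof -
  have "(p, q) \<notin> special_triangles n a d" for p q
  proof
    assume "(p, q) \<in> special_triangles n a d"
    then have "in_tri n (Suc p) q" "q < Suc p" "a (Suc p) q = a (Suc p - 1) q"
      "has_ne (d (Suc p) q)"
      unfolding special_triangles_def in_tri_def by auto
    then show False
      using rhs_pattern_conditions(5)[OF assms, of "Suc p" q] unfolding in_tri_def by auto
  qed
  then show ?thesis
    by auto
qed

section \<open>The involution\<close>

definition arrowed_GT_no_double :: "nat \<Rightarrow> (nat \<Rightarrow> int) \<Rightarrow> (entries \<times> decorations) set" where
  "arrowed_GT_no_double n k = {(a, d) \<in> arrowed_GT n k. no_double n d}"

lemma mem_arrowed_GT_no_double:
  "(a, d) \<in> arrowed_GT_no_double n k \<longleftrightarrow>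
    gt_pattern n k a \<and> dec_normal n d \<and> arrowed_cond n a d \<and> no_double n d"
  unfolding arrowed_GT_no_double_def arrowed_GT_def by auto

lemma finite_arrowed_GT_no_double: "finite (arrowed_GT_no_double n k)"
  by (rule finite_subset[OF _ finite_decorated_gt_patterns]) (auto simp: mem_arrowed_GT_no_double)

lemma rhs_patterns_subset_arrowed_GT_no_double: "rhs_patterns n k \<subseteq> arrowed_GT_no_double n k"
  using rhs_pattern_conditions(1-3) arrowed_cond_if_rhs_pattern
  by (auto simp: mem_arrowed_GT_no_double)

(* The choice depends only on the set of sites, which toggling does not change. *)
definition toggle_some_site :: "nat \<Rightarrow> entries \<Rightarrow> decorations \<Rightarrow> decorations" where
  "toggle_some_site n a d = (case SOME s. s \<in> sites n a d of (i, j) \<Rightarrow> toggle_site n a d i j)"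

lemma toggle_some_site_sign_reversing:
  assumes "gt_pattern n k a" "dec_normal n d" "arrowed_cond n a d" "no_double n d"
    and "sites n a d \<noteq> {}"
  shows "dec_normal n (toggle_some_site n a d)" "arrowed_cond n a (toggle_some_site n a d)"
    "no_double n (toggle_some_site n a d)" "sites n a (toggle_some_site n a d) = sites n a d"
    "toggle_some_site n a (toggle_some_site n a d) = d"
    "(-1::int) ^ card (special_triangles n a (toggle_some_site n a d)) =
      - ((-1) ^ card (special_triangles n a d))"
proof -
  obtain i j where chosen: "(SOME s. s \<in> sites n a d) = (i, j)"
    by fastforce
  then have site: "(i, j) \<in> sites n a d"
    using someI_ex[of "\<lambda>s. s \<in> sites n a d"] assms(5) by auto
  have toggle: "toggle_some_site n a d = toggle_site n a d i j"
    unfolding toggle_some_site_def chosen by simp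
  have valid: "site_word_valid n a d i j"
    using arrowed_site_word_valid[OF assms(1,3,4) site] .
  show "dec_normal n (toggle_some_site n a d)"
    unfolding toggle using toggle_site_dec_normal[OF assms(2) site] .
  show "arrowed_cond n a (toggle_some_site n a d)"
    unfolding toggle using toggle_site_arrowed_cond[OF assms(1,3) site valid] .
  show "no_double n (toggle_some_site n a d)"
    unfolding toggle using toggle_site_no_double[OF assms(4) valid] .
  show same_sites: "sites n a (toggle_some_site n a d) = sites n a d"
    unfolding toggle using sites_toggle_site[OF site] .
  have "toggle_some_site n a (toggle_site n a d i j) = toggle_site n a (toggle_site n a d i j) i j"
    unfolding toggle_some_site_def same_sites[unfolded toggle] chosen by simp
  then show "toggle_some_site n a (toggle_some_site n a d) = d"
    unfolding toggle using toggle_site_toggle_site by simp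
  show "(-1::int) ^ card (special_triangles n a (toggle_some_site n a d)) =
      - ((-1) ^ card (special_triangles n a d))"
    unfolding toggle using toggle_site_special_triangles_sign[OF assms(1) site valid] .
qed

lemma sum_sign_arrowed_GT_no_double_with_sites:
  "(\<Sum>(a, d) \<in> arrowed_GT_no_double n k - rhs_patterns n k.
      (-1::int) ^ card (special_triangles n a d)) = 0"
proof -
  define sign where "sign = (\<lambda>(a, d). (-1::int) ^ card (special_triangles n a d))"
  define \<iota> where "\<iota> = (\<lambda>(a, d). (a, toggle_some_site n a d))"
  have "\<iota> x \<in> arrowed_GT_no_double n k - rhs_patterns n k \<and> \<iota> (\<iota> x) = x \<and> sign (\<iota> x) + sign x = 0"
    if "x \<in> arrowed_GT_no_double n k - rhs_patterns n k" for x
  proof -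
    obtain a d where x: "x = (a, d)"
      by fastforce
    then have pattern: "gt_pattern n k a" "dec_normal n d" "arrowed_cond n a d" "no_double n d"
      and "sites n a d \<noteq> {}"
      using that rhs_pattern_if_no_sites by (auto simp: mem_arrowed_GT_no_double)
    note toggled = toggle_some_site_sign_reversing[OF this]
    show ?thesis
      using toggled pattern(1) no_sites_if_rhs_pattern \<open>sites n a d \<noteq> {}\<close>
      by (auto simp: x \<iota>_def sign_def mem_arrowed_GT_no_double)
  qed
  moreover have "\<iota> x \<noteq> x" if "sign (\<iota> x) + sign x = 0" for x
    using that by (auto simp: sign_def case_prod_unfold)
  ultimately show ?thesis
    using sum_involution_eq_0[of "arrowed_GT_no_double n k - rhs_patterns n k" sign \<iota>]
    unfolding sign_def by blast
qed

theorem proposition2p2: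
  fixes n :: nat and k :: "nat \<Rightarrow> int"
  assumes "n \<ge> 1"
    and "\<And>j. 1 \<le> j \<Longrightarrow> j < n \<Longrightarrow> k j \<le> k (Suc j)"
  shows "(\<Sum>(a, d) \<in> {(a, d) \<in> arrowed_GT n k. no_double n d}.
            (-1::int) ^ card (special_triangles n a d))
         = int (card (rhs_patterns n k))"
proof -
  let ?sign = "\<lambda>(a, d). (-1::int) ^ card (special_triangles n a d)"
  have "sum ?sign (arrowed_GT_no_double n k) =
      sum ?sign (arrowed_GT_no_double n k - rhs_patterns n k) + sum ?sign (rhs_patterns n k)"
    using rhs_patterns_subset_arrowed_GT_no_double finite_arrowed_GT_no_double
    by (rule sum.subset_diff)
  also have "\<dots> = int (card (rhs_patterns n k))"
    using sum_sign_arrowed_GT_no_double_with_sites special_triangles_rhs_pattern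
    by (simp add: case_prod_unfold)
  finally show ?thesis
    unfolding arrowed_GT_no_double_def .
qed

end
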